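(* Let $\{a_n\}_{n\ge0}$ be a P-recursive sequence whose asymptotic expression is \[ a_n = e^{Q(\rho,n)}\, n^{r}\left(\sum_{s=0}^{M} b_s n^{-s/\rho} + o\!\left(n^{-M/\rho}\right)\right),\qquad Q(\rho,n)=\mu_0 n\log n+\sum_{j=1}^{\rho}\mu_j n^{j/\rho}, \] where $\rho, M$ are positive integers, $\mu_j, r, b_s$ are real numbers, and $b_0\neq 0$. Then there exist real numbers $c_1,\dots,c_M$ such that \[ \lim_{n\to\infty} n^{M/\rho}\left(\frac{a_na_{n+2}}{a_{n+1}^2}-1-\sum_{i=1}^{M}\frac{c_i}{n^{i/\rho}}\right)=0 . \]
   Context: A sequence $\{a_n\}$ is P-recursive (of order $d$) if it satisfies a recurrence $a_n=r_1(n)a_{n-1}+\cdots+r_d(n)a_{n-d}$ with rational functions $r_i(n)$. *)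

theory Defs
  imports "HOL-Computational_Algebra.Polynomial" "HOL-Library.Landau_Symbols"
begin

definition P_recursive_of_order :: "(nat \<Rightarrow> real) \<Rightarrow> nat \<Rightarrow> bool" where
  "P_recursive_of_order a d \<longleftrightarrow>
     (\<exists>(p :: nat \<Rightarrow> real poly) (q :: nat \<Rightarrow> real poly) (N :: nat).
        N \<ge> d \<and> (\<forall>i\<in>{1..d}. q i \<noteq> 0) \<and>
        (\<forall>n\<ge>N. (\<forall>i\<in>{1..d}. poly (q i) (real n) \<noteq> 0) \<and>
           a n = (\<Sum>i=1..d. poly (p i) (real n) / poly (q i) (real n) * a (n - i))))"

definition P_recursive :: "(nat \<Rightarrow> real) \<Rightarrow> bool" where
  "P_recursive a \<longleftrightarrow> (\<exists>d. P_recursive_of_order a d)"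

definition Qexp :: "nat \<Rightarrow> (nat \<Rightarrow> real) \<Rightarrow> nat \<Rightarrow> real" where
  "Qexp \<rho> \<mu> n = \<mu> 0 * real n * ln (real n) + (\<Sum>j=1..\<rho>. \<mu> j * real n powr (real j / real \<rho>))"

end

theory Submission
  imports Defs "HOL-Analysis.Analysis"
begin

text \<open>Write \<open>a\<^sub>n = exp (\<Lambda> n) (B n + e\<^sub>n)\<close> with \<open>\<Lambda> n = Q(\<rho>, n) + r log n\<close>,
  \<open>B n = \<Sum>\<^sub>s b\<^sub>s n\<^bsup>-s/\<rho>\<^esup>\<close> and \<open>e\<^sub>n = o(n\<^bsup>-M/\<rho>\<^esup>)\<close>. Then
  \<open>a\<^sub>n a\<^sub>n\<^sub>+\<^sub>2 / a\<^sub>n\<^sub>+\<^sub>1\<^sup>2\<close> is \<open>exp\<close> of the second difference of \<open>\<Lambda>\<close> times the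
  corresponding ratio of the \<open>B n + e\<^sub>n\<close>. Expanding \<open>(1 + k/n)\<^bsup>\<alpha>\<^esup>\<close> and \<open>log (1 + k/n)\<close>
  in power series shows that the second difference kills the growth of \<open>n\<^bsup>j/\<rho>\<^esup>\<close>
  (\<open>j \<le> \<rho>\<close>), \<open>n log n\<close> and \<open>log n\<close>, so that it, and every shift \<open>B (n + k)\<close>, has an
  asymptotic expansion to all orders in powers of \<open>x = n\<^bsup>-1/\<rho>\<^esup>\<close>. Hence so does
  \<open>exp (\<Delta>\<^sup>2\<Lambda>) B\<^sub>n B\<^sub>n\<^sub>+\<^sub>2 / B\<^sub>n\<^sub>+\<^sub>1\<^sup>2\<close>, with constant term 1, while the errors
  \<open>e\<close> perturb the ratio only by \<open>o(x\<^sup>M)\<close>; the \<open>c\<^sub>i\<close> are the coefficients of that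
  expansion.\<close>

section \<open>Power series on an interval\<close>

definition has_power_series :: "(real \<Rightarrow> real) \<Rightarrow> real \<Rightarrow> (nat \<Rightarrow> real) \<Rightarrow> bool" where
  "has_power_series g R a \<longleftrightarrow> R > 0 \<and> (\<forall>t. \<bar>t\<bar> < R \<longrightarrow> (\<lambda>i. a i * t ^ i) sums g t)"

lemma has_power_series_radius_pos: "has_power_series g R a \<Longrightarrow> R > 0"
  by (simp add: has_power_series_def)

lemma has_power_series_sums:
  "has_power_series g R a \<Longrightarrow> \<bar>t\<bar> < R \<Longrightarrow> (\<lambda>i. a i * t ^ i) sums g t"
  by (simp add: has_power_series_def)

lemma has_power_series_at_0: "has_power_series g R a \<Longrightarrow> g 0 = a 0"
  using has_power_series_sums[of g R a 0] has_power_series_radius_pos[of g R a]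
    powser_sums_zero_iff[of a "g 0"] by simp

lemma has_power_series_mono:
  "has_power_series g R a \<Longrightarrow> 0 < R' \<Longrightarrow> R' \<le> R \<Longrightarrow> has_power_series g R' a"
  by (auto simp: has_power_series_def)

lemma has_power_series_add:
  assumes "has_power_series f R a" "has_power_series g R b"
  shows "has_power_series (\<lambda>t. f t + g t) R (\<lambda>i. a i + b i)"
  using assms sums_add[of "\<lambda>i. a i * _ ^ i" _ "\<lambda>i. b i * _ ^ i"]
  by (auto simp: has_power_series_def distrib_right)

lemma has_power_series_cmult:
  assumes "has_power_series g R a"
  shows "has_power_series (\<lambda>t. c * g t) R (\<lambda>i. c * a i)"
  using assms sums_mult[of "\<lambda>i. a i * _ ^ i" _ c] by (auto simp: has_power_series_def mult.assoc)

lemma has_power_series_double: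
  assumes "has_power_series g R a"
  shows "has_power_series (\<lambda>t. g (2 * t)) (R / 2) (\<lambda>i. a i * 2 ^ i)"
  using assms has_power_series_sums[OF assms, of "2 * _"]
  by (auto simp: has_power_series_def power_mult_distrib mult.assoc)

lemma has_power_series_poly: "has_power_series (poly p) 1 (coeff p)"
proof -
  have "(\<lambda>i. coeff p i * t ^ i) sums poly p t" for t
    using sums_finite[of "{..degree p}" "\<lambda>i. coeff p i * t ^ i"]
    by (auto simp: poly_altdef coeff_eq_0)
  thus ?thesis by (simp add: has_power_series_def)
qed

lemma has_power_series_exp: "has_power_series exp 1 (\<lambda>i. 1 / fact i)"
proof -
  have "(\<lambda>i. 1 / fact i * t ^ i) sums exp t" for t :: real
    using exp_converges[of t] by (simp add: scaleR_conv_of_real field_simps)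
  thus ?thesis by (simp add: has_power_series_def)
qed

lemma has_power_series_const: "R > 0 \<Longrightarrow> has_power_series (\<lambda>_. c) R (\<lambda>i. if i = 0 then c else 0)"
proof -
  have "(\<lambda>i. (if i = 0 then c else 0) * t ^ i) = (\<lambda>i. if i = 0 then c else 0)" for t :: real
    by auto
  thus "R > 0 \<Longrightarrow> ?thesis" using sums_single[of 0 "\<lambda>_. c"] by (simp add: has_power_series_def)
qed

lemma has_power_series_ln: "has_power_series (\<lambda>t. ln (1 + t)) 1 (\<lambda>i. - ((-1) ^ i) / real i)"
proof -
  have "(\<lambda>i. - ((-1) ^ i) / real i * t ^ i) sums ln (1 + t)" if "\<bar>t\<bar> < 1" for t
    using ln_series'[OF that] by (simp add: power_minus[of t])
  thus ?thesis by (simp add: has_power_series_def)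
qed

lemma has_power_series_powr: "has_power_series (\<lambda>t. (1 + t) powr \<alpha>) 1 (\<lambda>i. \<alpha> gchoose i)"
  using gen_binomial_real by (auto simp: has_power_series_def)

lemma has_power_series_inverse: "has_power_series (\<lambda>t. 1 / (1 + t)) 1 (\<lambda>i. (-1) ^ i)"
proof -
  have "(\<lambda>i. (-1) ^ i * t ^ i) sums (1 / (1 + t))" if "\<bar>t\<bar> < 1" for t :: real
    using geometric_sums[of "-t"] that by (simp add: power_minus[of t])
  thus ?thesis by (simp add: has_power_series_def)
qed

lemma has_power_series_shift:
  assumes "has_power_series g R a" "\<forall>i<k. a i = 0"
  obtains h where "has_power_series h R (\<lambda>i. a (i + k))"
    "\<And>t. \<bar>t\<bar> < R \<Longrightarrow> g t = t ^ k * h t"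
proof
  define h where "h t = (\<Sum>i. a (i + k) * t ^ i)" for t
  have sums_h: "(\<lambda>i. a (i + k) * t ^ i) sums h t \<and> g t = t ^ k * h t" if t: "\<bar>t\<bar> < R" for t
  proof (cases "t = 0")
    case True
    have "g 0 = a 0" by (rule has_power_series_at_0[OF assms(1)])
    moreover have "g 0 = 0 ^ k * a k" if "k > 0" using assms(2) that by (simp add: calculation)
    ultimately show ?thesis
      using True powser_sums_zero[of "\<lambda>i. a (i + k)"] powser_zero[of "\<lambda>i. a (i + k)"]
      by (cases k) (auto simp: h_def)
  next
    case False
    have "(\<lambda>i. a (i + k) * t ^ (i + k)) sums g t"
      using sums_iff_shift[of "\<lambda>i. a i * t ^ i" k] has_power_series_sums[OF assms(1) t] assms(2)
      by simp
    from sums_divide[OF this, of "t ^ k"] False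
    have "(\<lambda>i. a (i + k) * t ^ i) sums (g t / t ^ k)" by (simp add: power_add)
    thus ?thesis using False by (simp add: h_def sums_iff)
  qed
  show "has_power_series h R (\<lambda>i. a (i + k))"
    using sums_h has_power_series_radius_pos[OF assms(1)] by (simp add: has_power_series_def)
  show "g t = t ^ k * h t" if "\<bar>t\<bar> < R" for t using sums_h[OF that] by simp
qed

lemma has_power_series_bounded:
  assumes "has_power_series h R b"
  obtains K where "\<And>t. \<bar>t\<bar> \<le> R / 2 \<Longrightarrow> \<bar>h t\<bar> \<le> K"
proof
  have R: "R > 0" by (rule has_power_series_radius_pos[OF assms])
  have "summable (\<lambda>i. b i * (3 * R / 4) ^ i)"
    using has_power_series_sums[OF assms, of "3 * R / 4"] R by (simp add: sums_iff)
  hence sn: "summable (\<lambda>i. norm (b i * (R / 2) ^ i))"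
    by (rule powser_insidea) (use R in simp)
  fix t :: real assume t: "\<bar>t\<bar> \<le> R / 2"
  have le: "norm (b i * t ^ i) \<le> norm (b i * (R / 2) ^ i)" for i
    using power_mono[OF t, of i] R by (simp add: abs_mult power_abs mult_left_mono)
  have sn2: "summable (\<lambda>i. norm (b i * t ^ i))" by (rule summable_comparison_test[OF _ sn]) (use le in auto)
  have "h t = (\<Sum>i. b i * t ^ i)"
    using has_power_series_sums[OF assms, of t] t R by (simp add: sums_iff)
  also have "\<bar>\<dots>\<bar> \<le> (\<Sum>i. norm (b i * t ^ i))" using summable_norm[OF sn2] by simp
  also have "\<dots> \<le> (\<Sum>i. norm (b i * (R / 2) ^ i))" by (rule suminf_le[OF le sn2 sn])
  finally show "\<bar>h t\<bar> \<le> (\<Sum>i. norm (b i * (R / 2) ^ i))" .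
qed

lemma has_power_series_truncation:
  assumes "has_power_series g R a"
  obtains \<delta> K where "\<delta> > 0" "\<And>t. \<bar>t\<bar> < \<delta> \<Longrightarrow> \<bar>g t - (\<Sum>i<m. a i * t ^ i)\<bar> \<le> K * \<bar>t\<bar> ^ m"
proof -
  have R: "R > 0" by (rule has_power_series_radius_pos[OF assms])
  define a' where "a' i = (if i < m then 0 else a i)" for i
  have "has_power_series (\<lambda>t. g t - (\<Sum>i<m. a i * t ^ i)) R a'"
    unfolding has_power_series_def
  proof (intro conjI R allI impI)
    fix t :: real assume t: "\<bar>t\<bar> < R"
    have "(\<lambda>i. a i * t ^ i - (if i < m then a i * t ^ i else 0)) = (\<lambda>i. a' i * t ^ i)"
      by (auto simp: a'_def)
    with sums_diff[OF has_power_series_sums[OF assms t]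
        sums_finite[of "{..<m}" "\<lambda>i. if i < m then a i * t ^ i else 0"]]
    show "(\<lambda>i. a' i * t ^ i) sums (g t - (\<Sum>i<m. a i * t ^ i))"
      by simp
  qed
  then obtain h where h: "has_power_series h R (\<lambda>i. a' (i + m))"
    "\<And>t. \<bar>t\<bar> < R \<Longrightarrow> g t - (\<Sum>i<m. a i * t ^ i) = t ^ m * h t"
    by (rule has_power_series_shift[of _ R a' m]) (auto simp: a'_def)
  obtain K where K: "\<And>t. \<bar>t\<bar> \<le> R / 2 \<Longrightarrow> \<bar>h t\<bar> \<le> K" using has_power_series_bounded[OF h(1)] by blast
  show thesis
  proof
    show "R / 2 > 0" using R by simp
    fix t :: real assume t: "\<bar>t\<bar> < R / 2"
    have "\<bar>g t - (\<Sum>i<m. a i * t ^ i)\<bar> = \<bar>t\<bar> ^ m * \<bar>h t\<bar>"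
      using h(2)[of t] t R by (simp add: abs_mult power_abs)
    also have "\<dots> \<le> \<bar>t\<bar> ^ m * K" using K[of t] t by (intro mult_left_mono) auto
    finally show "\<bar>g t - (\<Sum>i<m. a i * t ^ i)\<bar> \<le> K * \<bar>t\<bar> ^ m" by (simp add: mult.commute)
  qed
qed

text \<open>The coefficients of \<open>t^0\<close> and \<open>t^1\<close> cancel in \<open>g 0 + g (2t) - 2 g t\<close>.\<close>
lemma has_power_series_second_difference:
  assumes "has_power_series g R a"
  obtains h c where "has_power_series h (R / 2) c"
    "\<And>t. \<bar>t\<bar> < R / 2 \<Longrightarrow> g 0 + g (2 * t) - 2 * g t = t\<^sup>2 * h t"
proof -
  have R: "R > 0" by (rule has_power_series_radius_pos[OF assms])
  define d where "d i = (if i = 0 then g 0 else 0) + a i * 2 ^ i + (-2) * a i" for i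
  have "has_power_series (\<lambda>t. g 0 + g (2 * t) + (-2) * g t) (R / 2) d"
    unfolding d_def
  proof (intro has_power_series_add has_power_series_double assms has_power_series_cmult)
    show "has_power_series (\<lambda>t. g 0) (R / 2) (\<lambda>i. if i = 0 then g 0 else 0)"
      using R by (intro has_power_series_const) simp
    show "has_power_series g (R / 2) a" by (rule has_power_series_mono[OF assms]) (use R in auto)
  qed
  moreover have "\<forall>i<2. d i = 0"
    using has_power_series_at_0[OF assms] by (auto simp: d_def less_2_cases_iff)
  ultimately obtain h where h: "has_power_series h (R / 2) (\<lambda>i. d (i + 2))"
      "\<And>t. \<bar>t\<bar> < R / 2 \<Longrightarrow> g 0 + g (2 * t) + (-2) * g t = t ^ 2 * h t"
    by (rule has_power_series_shift) auto
  show thesis by (rule that[OF h(1)]) (use h(2) in simp)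
qed

section \<open>Asymptotic expansions in powers of a null sequence\<close>

text \<open>Allowing the approximating polynomial to depend on the order spares us
  from computing the coefficients of products and compositions.\<close>
definition has_poly_expansion :: "(nat \<Rightarrow> real) \<Rightarrow> (nat \<Rightarrow> real) \<Rightarrow> real \<Rightarrow> bool" where
  "has_poly_expansion x f L \<longleftrightarrow>
     (\<forall>m. \<exists>p. poly p 0 = L \<and> (\<lambda>n. f n - poly p (x n)) \<in> O(\<lambda>n. x n ^ m))"

lemma has_poly_expansionE:
  assumes "has_poly_expansion x f L"
  obtains p where "poly p 0 = L" "(\<lambda>n. f n - poly p (x n)) \<in> O(\<lambda>n. x n ^ m)"
  using assms by (auto simp: has_poly_expansion_def)

lemma has_poly_expansion_cong:
  assumes "has_poly_expansion x f L" "eventually (\<lambda>n. f n = g n) sequentially"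
  shows "has_poly_expansion x g L"
proof -
  have "(\<lambda>n. g n - poly p (x n)) \<in> O(\<lambda>n. x n ^ m)"
    if "(\<lambda>n. f n - poly p (x n)) \<in> O(\<lambda>n. x n ^ m)" for p m
    using that landau_o.big.in_cong[of "\<lambda>n. f n - poly p (x n)" "\<lambda>n. g n - poly p (x n)"]
      eventually_mono[OF assms(2)] by auto
  thus ?thesis using assms(1) unfolding has_poly_expansion_def by blast
qed

lemma has_poly_expansion_const: "has_poly_expansion x (\<lambda>_. c) c"
  unfolding has_poly_expansion_def by (intro allI exI[of _ "[:c:]"]) simp

lemma has_poly_expansion_ident: "has_poly_expansion x x 0"
  unfolding has_poly_expansion_def by (intro allI exI[of _ "[:0, 1:]"]) simp

lemma has_poly_expansion_add:
  assumes "has_poly_expansion x f L1" "has_poly_expansion x g L2"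
  shows "has_poly_expansion x (\<lambda>n. f n + g n) (L1 + L2)"
  unfolding has_poly_expansion_def
proof
  fix m
  obtain p where p: "poly p 0 = L1" "(\<lambda>n. f n - poly p (x n)) \<in> O(\<lambda>n. x n ^ m)"
    using assms(1) by (rule has_poly_expansionE)
  obtain q where q: "poly q 0 = L2" "(\<lambda>n. g n - poly q (x n)) \<in> O(\<lambda>n. x n ^ m)"
    using assms(2) by (rule has_poly_expansionE)
  have "(\<lambda>n. (f n - poly p (x n)) + (g n - poly q (x n))) \<in> O(\<lambda>n. x n ^ m)"
    by (rule sum_in_bigo(1)[OF p(2) q(2)])
  thus "\<exists>r. poly r 0 = L1 + L2 \<and> (\<lambda>n. f n + g n - poly r (x n)) \<in> O(\<lambda>n. x n ^ m)"
    using p(1) q(1) by (intro exI[of _ "p + q"]) (simp add: algebra_simps)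
qed

lemma has_poly_expansion_cmult:
  assumes "has_poly_expansion x f L"
  shows "has_poly_expansion x (\<lambda>n. c * f n) (c * L)"
  unfolding has_poly_expansion_def
proof
  fix m
  obtain p where "poly p 0 = L" "(\<lambda>n. f n - poly p (x n)) \<in> O(\<lambda>n. x n ^ m)"
    using assms by (rule has_poly_expansionE)
  moreover from this(2) have "(\<lambda>n. c * (f n - poly p (x n))) \<in> O(\<lambda>n. x n ^ m)"
    by (cases "c = 0") simp_all
  ultimately show "\<exists>p. poly p 0 = c * L \<and> (\<lambda>n. c * f n - poly p (x n)) \<in> O(\<lambda>n. x n ^ m)"
    by (intro exI[of _ "smult c p"]) (simp add: algebra_simps)
qed

lemma has_poly_expansion_diff:
  assumes "has_poly_expansion x f L1" "has_poly_expansion x g L2"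
  shows "has_poly_expansion x (\<lambda>n. f n - g n) (L1 - L2)"
  using has_poly_expansion_add[OF assms(1) has_poly_expansion_cmult[OF assms(2), of "-1"]] by simp

lemma has_poly_expansion_sum:
  assumes "\<And>j. j \<in> S \<Longrightarrow> has_poly_expansion x (F j) (L j)"
  shows "has_poly_expansion x (\<lambda>n. \<Sum>j\<in>S. F j n) (\<Sum>j\<in>S. L j)"
  using assms
  by (induction S rule: infinite_finite_induct) (auto intro: has_poly_expansion_const has_poly_expansion_add)

context
  fixes x :: "nat \<Rightarrow> real"
  assumes x_tendsto: "x \<longlonglongrightarrow> 0"
begin

lemma bigo_higher_power:
  assumes "m \<le> k"
  shows "(\<lambda>n. x n ^ k) \<in> O(\<lambda>n. x n ^ m)"
proof (rule bigoI[where c = 1])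
  have "eventually (\<lambda>n. dist (x n) 0 < 1) sequentially" using x_tendsto by (rule tendstoD) simp
  thus "eventually (\<lambda>n. norm (x n ^ k) \<le> 1 * norm (x n ^ m)) sequentially"
  proof eventually_elim
    case (elim n)
    have "\<bar>x n\<bar> ^ k = \<bar>x n\<bar> ^ m * \<bar>x n\<bar> ^ (k - m)" using assms by (simp flip: power_add)
    also have "\<dots> \<le> \<bar>x n\<bar> ^ m" using elim by (intro mult_left_le power_le_one) auto
    finally show ?case by (simp add: power_abs)
  qed
qed

lemma poly_bigo_1: "(\<lambda>n. poly p (x n)) \<in> O(\<lambda>_. 1)"
  by (rule bigoI_tendsto[where c = "poly p 0"]) (use x_tendsto in \<open>auto intro!: tendsto_intros\<close>)

lemma has_poly_expansion_bigo_1: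
  assumes "has_poly_expansion x f L"
  shows "f \<in> O(\<lambda>_. 1)"
proof -
  obtain p where "(\<lambda>n. f n - poly p (x n)) \<in> O(\<lambda>n. x n ^ 0)"
    using assms by (rule has_poly_expansionE)
  from sum_in_bigo(1)[OF this[simplified] poly_bigo_1[of p]] show ?thesis by simp
qed

lemma has_poly_expansion_tendsto:
  assumes "has_poly_expansion x f L"
  shows "f \<longlonglongrightarrow> L"
proof -
  obtain p where p: "poly p 0 = L" "(\<lambda>n. f n - poly p (x n)) \<in> O(\<lambda>n. x n ^ 1)"
    using assms by (rule has_poly_expansionE)
  have "(\<lambda>n. x n ^ 1) \<in> o(\<lambda>_. 1)" by (rule smalloI_tendsto) (use x_tendsto in auto)
  from smalloD_tendsto[OF landau_o.big_small_trans[OF p(2) this]]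
  have "(\<lambda>n. f n - poly p (x n)) \<longlonglongrightarrow> 0" by simp
  moreover have "(\<lambda>n. poly p (x n)) \<longlonglongrightarrow> L" using p(1) x_tendsto by (auto intro!: tendsto_eq_intros)
  ultimately have "(\<lambda>n. (f n - poly p (x n)) + poly p (x n)) \<longlonglongrightarrow> 0 + L" by (rule tendsto_add)
  thus ?thesis by simp
qed

lemma has_poly_expansion_bigo:
  assumes "has_poly_expansion x f 0"
  shows "f \<in> O(x)"
proof -
  obtain p where p: "poly p 0 = 0" "(\<lambda>n. f n - poly p (x n)) \<in> O(\<lambda>n. x n ^ 1)"
    using assms by (rule has_poly_expansionE)
  then obtain q where "p = pCons 0 q" by (metis pCons_cases poly_pCons mult_zero_left add_0_right)
  hence "(\<lambda>n. poly p (x n)) \<in> O(x)"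
    using landau_o.big_1_mult[OF landau_o.big_refl poly_bigo_1, of x q] by simp
  moreover have "(\<lambda>n. f n - poly p (x n)) \<in> O(x)" using p(2) by simp
  ultimately have "(\<lambda>n. (f n - poly p (x n)) + poly p (x n)) \<in> O(x)" by (intro sum_in_bigo(1))
  thus ?thesis by simp
qed

lemma has_poly_expansion_mult:
  assumes f: "has_poly_expansion x f L1" and g: "has_poly_expansion x g L2"
  shows "has_poly_expansion x (\<lambda>n. f n * g n) (L1 * L2)"
  unfolding has_poly_expansion_def
proof
  fix m
  obtain p where p: "poly p 0 = L1" "(\<lambda>n. f n - poly p (x n)) \<in> O(\<lambda>n. x n ^ m)"
    using f by (rule has_poly_expansionE)
  obtain q where q: "poly q 0 = L2" "(\<lambda>n. g n - poly q (x n)) \<in> O(\<lambda>n. x n ^ m)"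
    using g by (rule has_poly_expansionE)
  have "(\<lambda>n. (f n - poly p (x n)) * g n + (g n - poly q (x n)) * poly p (x n)) \<in> O(\<lambda>n. x n ^ m)"
    by (intro sum_in_bigo(1) landau_o.big_1_mult[OF p(2) has_poly_expansion_bigo_1[OF g]]
        landau_o.big_1_mult[OF q(2) poly_bigo_1])
  thus "\<exists>r. poly r 0 = L1 * L2 \<and> (\<lambda>n. f n * g n - poly r (x n)) \<in> O(\<lambda>n. x n ^ m)"
    using p(1) q(1) by (intro exI[of _ "p * q"]) (simp add: algebra_simps)
qed

lemma has_poly_expansion_power:
  "has_poly_expansion x f L \<Longrightarrow> has_poly_expansion x (\<lambda>n. f n ^ k) (L ^ k)"
  by (induction k) (simp_all add: has_poly_expansion_const has_poly_expansion_mult)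

lemma has_poly_expansion_poly:
  assumes "has_poly_expansion x f L"
  shows "has_poly_expansion x (\<lambda>n. poly q (f n)) (poly q L)"
  by (induction q) (auto intro!: has_poly_expansion_add has_poly_expansion_mult assms
      has_poly_expansion_const)

lemma has_poly_expansion_compose:
  assumes f: "has_poly_expansion x f 0" and g: "has_power_series g R a"
  shows "has_poly_expansion x (\<lambda>n. g (f n)) (g 0)"
  unfolding has_poly_expansion_def
proof
  fix m
  define q where "q = (\<Sum>i<Suc m. monom (a i) i)"
  have poly_q: "poly q t = (\<Sum>i<Suc m. a i * t ^ i)" for t by (simp add: q_def poly_sum poly_monom)
  obtain \<delta> K where \<delta>: "\<delta> > 0"
    and K: "\<And>t. \<bar>t\<bar> < \<delta> \<Longrightarrow> \<bar>g t - poly q t\<bar> \<le> K * \<bar>t\<bar> ^ Suc m"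
    using has_power_series_truncation[OF g, of "Suc m"] unfolding poly_q[symmetric] by blast
  have "eventually (\<lambda>n. dist (f n) 0 < \<delta>) sequentially"
    using has_poly_expansion_tendsto[OF f] \<delta> by (rule tendstoD)
  hence "eventually (\<lambda>n. norm (g (f n) - poly q (f n)) \<le> K * norm (f n ^ Suc m)) sequentially"
    by eventually_elim (use K in \<open>simp only: real_norm_def power_abs dist_real_def diff_0_right\<close>)
  hence "(\<lambda>n. g (f n) - poly q (f n)) \<in> O(\<lambda>n. f n ^ Suc m)" by (rule bigoI)
  also have "(\<lambda>n. f n ^ Suc m) \<in> O(\<lambda>n. x n ^ Suc m)"
    by (rule landau_o.big_power[OF has_poly_expansion_bigo[OF f]])
  also have "(\<lambda>n. x n ^ Suc m) \<in> O(\<lambda>n. x n ^ m)" by (rule bigo_higher_power) simp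
  finally have approx_g: "(\<lambda>n. g (f n) - poly q (f n)) \<in> O(\<lambda>n. x n ^ m)" .
  have "poly q 0 = g 0" using has_power_series_at_0[OF g] by (simp add: poly_q)
  then obtain p where p: "poly p 0 = g 0" "(\<lambda>n. poly q (f n) - poly p (x n)) \<in> O(\<lambda>n. x n ^ m)"
    using has_poly_expansion_poly[OF f, of q] by (metis has_poly_expansionE)
  from sum_in_bigo(1)[OF approx_g p(2)] p(1)
  show "\<exists>p. poly p 0 = g 0 \<and> (\<lambda>n. g (f n) - poly p (x n)) \<in> O(\<lambda>n. x n ^ m)" by auto
qed

lemma has_poly_expansion_inverse:
  assumes f: "has_poly_expansion x f L" and L: "L \<noteq> 0"
  shows "has_poly_expansion x (\<lambda>n. 1 / f n) (1 / L)"
proof -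
  have L_1: "1 / L * L - 1 = 0" using L by simp
  have "has_poly_expansion x (\<lambda>n. 1 / L * f n - 1) (1 / L * L - 1)"
    by (intro has_poly_expansion_diff has_poly_expansion_cmult f has_poly_expansion_const)
  from has_poly_expansion_compose[OF _ has_power_series_inverse, OF this[unfolded L_1]]
  have "has_poly_expansion x (\<lambda>n. 1 / L * (1 / (1 + (1 / L * f n - 1)))) (1 / L * (1 / (1 + 0)))"
    by (rule has_poly_expansion_cmult)
  moreover have "(\<lambda>n. 1 / L * (1 / (1 + (1 / L * f n - 1)))) = (\<lambda>n. 1 / f n)"
  proof
    fix n
    show "1 / L * (1 / (1 + (1 / L * f n - 1))) = 1 / f n"
      using L by (cases "f n = 0") simp_all
  qed
  ultimately show ?thesis by simp
qed

lemma has_poly_expansion_coefficients: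
  assumes F: "has_poly_expansion x F L"
    and x_nonzero: "eventually (\<lambda>n. x n \<noteq> 0) sequentially"
    and R: "(\<lambda>n. R n - F n) \<in> o(\<lambda>n. x n ^ M)"
  obtains c where "c 0 = L" "(\<lambda>n. R n - (\<Sum>i\<le>M. c i * x n ^ i)) \<in> o(\<lambda>n. x n ^ M)"
proof -
  obtain p where p: "poly p 0 = L" "(\<lambda>n. F n - poly p (x n)) \<in> O(\<lambda>n. x n ^ Suc M)"
    using F by (rule has_poly_expansionE)
  obtain \<delta> K where \<delta>: "\<delta> > 0"
    and K: "\<And>t. \<bar>t\<bar> < \<delta> \<Longrightarrow> \<bar>poly p t - (\<Sum>i<Suc M. coeff p i * t ^ i)\<bar> \<le> K * \<bar>t\<bar> ^ Suc M"
    using has_power_series_truncation[OF has_power_series_poly[of p], of "Suc M"] by blast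
  have "eventually (\<lambda>n. dist (x n) 0 < \<delta>) sequentially" using x_tendsto \<delta> by (rule tendstoD)
  hence "eventually (\<lambda>n. norm (poly p (x n) - (\<Sum>i<Suc M. coeff p i * x n ^ i))
      \<le> K * norm (x n ^ Suc M)) sequentially"
    by eventually_elim (use K in \<open>simp only: real_norm_def power_abs dist_real_def diff_0_right\<close>)
  hence truncation: "(\<lambda>n. poly p (x n) - (\<Sum>i\<le>M. coeff p i * x n ^ i)) \<in> O(\<lambda>n. x n ^ Suc M)"
    unfolding lessThan_Suc_atMost by (rule bigoI)
  have "(\<lambda>n. x n ^ Suc M) \<in> o(\<lambda>n. x n ^ M)"
  proof (rule smalloI_tendsto)
    show "eventually (\<lambda>n. x n ^ M \<noteq> 0) sequentially" using x_nonzero by eventually_elim simp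
    have "eventually (\<lambda>n. x n = x n ^ Suc M / x n ^ M) sequentially"
      using x_nonzero by eventually_elim simp
    from Lim_transform_eventually[OF x_tendsto this]
    show "(\<lambda>n. x n ^ Suc M / x n ^ M) \<longlonglongrightarrow> 0" .
  qed
  with p(2) truncation have "(\<lambda>n. (R n - F n) + (F n - poly p (x n))
      + (poly p (x n) - (\<Sum>i\<le>M. coeff p i * x n ^ i))) \<in> o(\<lambda>n. x n ^ M)"
    by (intro sum_in_smallo(1) R) (auto intro: landau_o.big_small_trans)
  hence "(\<lambda>n. R n - (\<Sum>i\<le>M. coeff p i * x n ^ i)) \<in> o(\<lambda>n. x n ^ M)" by simp
  moreover have "coeff p 0 = L" using p(1) by (simp add: poly_0_coeff_0)
  ultimately show thesis by (intro that)
qed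

end

section \<open>Ratios of consecutive terms\<close>

lemma quotient_perturbation_identity:
  fixes u0 u1 u2 d0 d1 d2 :: real
  assumes "u1 + d1 \<noteq> 0" "u1 \<noteq> 0"
  shows "(u0 + d0) * (u2 + d2) / (u1 + d1)\<^sup>2 - u0 * u2 / u1\<^sup>2 =
    d0 * ((u2 + d2) / (u1 + d1)\<^sup>2) + d2 * (u0 / (u1 + d1)\<^sup>2)
    - d1 * ((1 / (u1 + d1) + 1 / u1) * u0 * u2 / ((u1 + d1) * u1))"
proof -
  define v where "v = u1 + d1"
  have d1: "d1 = v - u1" by (simp add: v_def)
  have "v \<noteq> 0" using assms(1) by (simp add: v_def)
  thus ?thesis using assms(2) unfolding v_def[symmetric] d1
    by (simp add: field_simps power2_eq_square)
qed

lemma quotient_perturbation_smallo: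
  fixes u0 u1 u2 d0 d1 d2 g :: "nat \<Rightarrow> real"
  assumes u: "u0 \<longlonglongrightarrow> \<beta>0" "u1 \<longlonglongrightarrow> \<beta>" "u2 \<longlonglongrightarrow> \<beta>2" "\<beta> \<noteq> 0"
    and d: "d1 \<longlonglongrightarrow> 0" "d2 \<longlonglongrightarrow> 0" "d0 \<in> o(g)" "d1 \<in> o(g)" "d2 \<in> o(g)"
  shows "(\<lambda>n. (u0 n + d0 n) * (u2 n + d2 n) / (u1 n + d1 n)\<^sup>2 - u0 n * u2 n / (u1 n)\<^sup>2) \<in> o(g)"
proof -
  have v: "(\<lambda>n. u1 n + d1 n) \<longlonglongrightarrow> \<beta>" using tendsto_add[OF u(2) d(1)] by simp
  have bounded: "h \<in> O(\<lambda>_. 1)" if "h \<longlonglongrightarrow> c" for h :: "nat \<Rightarrow> real" and c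
    by (rule bigoI_tendsto[where c = c]) (use that in simp_all)
  have "(\<lambda>n. d0 n * ((u2 n + d2 n) / (u1 n + d1 n)\<^sup>2) + d2 n * (u0 n / (u1 n + d1 n)\<^sup>2)
      - d1 n * ((1 / (u1 n + d1 n) + 1 / u1 n) * u0 n * u2 n / ((u1 n + d1 n) * u1 n))) \<in> o(g)"
  proof (intro sum_in_smallo landau_o.small_1_mult d bounded)
    show "(\<lambda>n. (u2 n + d2 n) / (u1 n + d1 n)\<^sup>2) \<longlonglongrightarrow> (\<beta>2 + 0) / \<beta>\<^sup>2"
      using u d v by (intro tendsto_intros) auto
    show "(\<lambda>n. u0 n / (u1 n + d1 n)\<^sup>2) \<longlonglongrightarrow> \<beta>0 / \<beta>\<^sup>2"
      using u v by (intro tendsto_intros) auto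
    show "(\<lambda>n. (1 / (u1 n + d1 n) + 1 / u1 n) * u0 n * u2 n / ((u1 n + d1 n) * u1 n))
        \<longlonglongrightarrow> (1 / \<beta> + 1 / \<beta>) * \<beta>0 * \<beta>2 / (\<beta> * \<beta>)"
      using u v by (intro tendsto_intros) auto
  qed
  moreover have "eventually (\<lambda>n. u1 n + d1 n \<noteq> 0 \<and> u1 n \<noteq> 0) sequentially"
    using tendsto_imp_eventually_ne[OF v u(4)] tendsto_imp_eventually_ne[OF u(2) u(4)]
    by eventually_elim blast
  hence "eventually (\<lambda>n. d0 n * ((u2 n + d2 n) / (u1 n + d1 n)\<^sup>2) + d2 n * (u0 n / (u1 n + d1 n)\<^sup>2)
      - d1 n * ((1 / (u1 n + d1 n) + 1 / u1 n) * u0 n * u2 n / ((u1 n + d1 n) * u1 n))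
      = (u0 n + d0 n) * (u2 n + d2 n) / (u1 n + d1 n)\<^sup>2 - u0 n * u2 n / (u1 n)\<^sup>2) sequentially"
    by eventually_elim (simp add: quotient_perturbation_identity)
  ultimately show ?thesis by (rule landau_o.small.in_cong[THEN iffD1, rotated])
qed

definition second_diff :: "(nat \<Rightarrow> real) \<Rightarrow> nat \<Rightarrow> real" where
  "second_diff f n = f n + f (n + 2) - 2 * f (n + 1)"

lemma exp_second_diff:
  "exp (second_diff f n) = exp (f n) * exp (f (n + 2)) / (exp (f (n + 1)))\<^sup>2"
  by (simp add: second_diff_def exp_diff exp_add flip: exp_of_nat_mult)

lemma exp_second_diff_ratio:
  "(exp (\<Lambda> n) * P n) * (exp (\<Lambda> (n + 2)) * P (n + 2)) / (exp (\<Lambda> (n + 1)) * P (n + 1))\<^sup>2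
    = exp (second_diff \<Lambda> n) * (P n * P (n + 2) / (P (n + 1))\<^sup>2)"
  by (simp add: exp_second_diff power_mult_distrib)

lemma has_poly_expansion_second_ratio:
  assumes x: "x \<longlonglongrightarrow> 0"
    and B: "\<And>k. has_poly_expansion x (\<lambda>n. B (n + k)) \<beta>" "\<beta> \<noteq> 0"
  shows "has_poly_expansion x (\<lambda>n. B n * B (n + 2) / (B (n + 1))\<^sup>2) 1"
proof -
  have "has_poly_expansion x (\<lambda>n. B (n + 0) * B (n + 2) * (1 / B (n + 1)) ^ 2)
      (\<beta> * \<beta> * (1 / \<beta>) ^ 2)"
    by (intro has_poly_expansion_mult[OF x] has_poly_expansion_power[OF x]
        has_poly_expansion_inverse[OF x] B)
  thus ?thesis using B(2) by (simp add: power2_eq_square field_simps)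
qed

lemma ratio_asymptotic_expansion:
  fixes x a \<Lambda> B e :: "nat \<Rightarrow> real"
  assumes x: "x \<longlonglongrightarrow> 0" "eventually (\<lambda>n. x n \<noteq> 0) sequentially"
    and \<Lambda>: "has_poly_expansion x (second_diff \<Lambda>) 0"
    and B: "\<And>k. has_poly_expansion x (\<lambda>n. B (n + k)) \<beta>" "\<beta> \<noteq> 0"
    and e: "\<And>k. (\<lambda>n. e (n + k)) \<in> o(\<lambda>n. x n ^ M)"
    and a: "eventually (\<lambda>n. a n = exp (\<Lambda> n) * (B n + e n)) sequentially"
  obtains c where "c 0 = 1"
    "(\<lambda>n. a n * a (n + 2) / (a (n + 1))\<^sup>2 - (\<Sum>i\<le>M. c i * x n ^ i)) \<in> o(\<lambda>n. x n ^ M)"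
proof -
  define U where "U n = exp (second_diff \<Lambda> n)" for n
  define V where "V n = B n * B (n + 2) / (B (n + 1))\<^sup>2" for n
  have U: "has_poly_expansion x U 1"
    using has_poly_expansion_compose[OF x(1) \<Lambda> has_power_series_exp] by (simp add: U_def[abs_def])
  have V: "has_poly_expansion x V 1"
    unfolding V_def[abs_def] by (rule has_poly_expansion_second_ratio[OF x(1) B])
  have B_lim: "(\<lambda>n. B (n + k)) \<longlonglongrightarrow> \<beta>" for k by (rule has_poly_expansion_tendsto[OF x(1) B(1)])
  have "(\<lambda>n. x n ^ M) \<in> O(\<lambda>_. 1)" using bigo_higher_power[OF x(1), of 0 M] by simp
  from smalloD_tendsto[OF landau_o.small_big_trans[OF e this]]
  have e_lim: "(\<lambda>n. e (n + k)) \<longlonglongrightarrow> 0" for k by simp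
  have "(\<lambda>n. (B n + e n) * (B (n + 2) + e (n + 2)) / (B (n + 1) + e (n + 1))\<^sup>2 - V n)
      \<in> o(\<lambda>n. x n ^ M)"
    unfolding V_def
    by (rule quotient_perturbation_smallo[OF B_lim[of 0, simplified] B_lim[of 1] B_lim[of 2] B(2)
          e_lim[of 1] e_lim[of 2] e[of 0, simplified] e[of 1] e[of 2]])
  from landau_o.small_1_mult'[OF has_poly_expansion_bigo_1[OF x(1) U] this]
  have "(\<lambda>n. a n * a (n + 2) / (a (n + 1))\<^sup>2 - U n * V n) \<in> o(\<lambda>n. x n ^ M)"
  proof (rule landau_o.small.in_cong[THEN iffD1, rotated])
    have "eventually (\<lambda>n. a (n + k) = exp (\<Lambda> (n + k)) * (B (n + k) + e (n + k))) sequentially"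
      for k by (rule eventually_sequentially_seg[THEN iffD2, OF a])
    from this[of 0] this[of 1] this[of 2]
    show "eventually (\<lambda>n. ((B n + e n) * (B (n + 2) + e (n + 2)) / (B (n + 1) + e (n + 1))\<^sup>2 - V n)
        * U n = a n * a (n + 2) / (a (n + 1))\<^sup>2 - U n * V n) sequentially"
    proof eventually_elim
      case (elim n)
      have "a n * a (n + 2) / (a (n + 1))\<^sup>2
          = U n * ((B n + e n) * (B (n + 2) + e (n + 2)) / (B (n + 1) + e (n + 1))\<^sup>2)"
        unfolding elim(1)[simplified] elim(2,3) U_def by (rule exp_second_diff_ratio)
      thus ?case by (simp add: algebra_simps)
    qed
  qed
  then obtain c where "c 0 = 1 * 1"
    "(\<lambda>n. a n * a (n + 2) / (a (n + 1))\<^sup>2 - (\<Sum>i\<le>M. c i * x n ^ i)) \<in> o(\<lambda>n. x n ^ M)"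
    by (rule has_poly_expansion_coefficients[OF x(1) has_poly_expansion_mult[OF x(1) U V] x(2)])
  thus thesis by (intro that) simp_all
qed

section \<open>Expansions in powers of \<open>n\<^bsup>-1/\<rho>\<^esup>\<close>\<close>

lemma powr_add_factor:
  fixes x c a :: real
  assumes "x > 0" "c \<ge> 0"
  shows "(x + c) powr a = x powr a * (1 + c / x) powr a"
proof -
  have "x + c = x * (1 + c / x)" using assms by (simp add: field_simps)
  thus ?thesis using assms by (simp add: powr_mult)
qed

lemma exp_mult_powr: "(x :: real) > 0 \<Longrightarrow> exp y * x powr r = exp (y + r * ln x)"
  by (simp add: powr_def exp_add)

lemma ln_add_factor:
  fixes x c :: real
  assumes "x > 0" "c \<ge> 0"
  shows "ln (x + c) = ln x + ln (1 + c / x)"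
proof -
  have "x + c = x * (1 + c / x)" "1 + c / x > 0" using assms by (simp_all add: field_simps)
  thus ?thesis using assms by (simp add: ln_mult)
qed

lemma ln_of_nat_add_factor: "n > 0 \<Longrightarrow> ln (real (n + k)) = ln (real n) + ln (1 + real k / real n)"
  using ln_add_factor[of "real n" "real k"] by simp

lemma ln_second_difference:
  obtains h c where "has_power_series h (1 / 2) c"
    "\<And>t. \<bar>t\<bar> < 1 / 2 \<Longrightarrow> ln (1 + 2 * t) - 2 * ln (1 + t) = t\<^sup>2 * h t"
proof -
  obtain h c where "has_power_series h (1 / 2) c"
    "\<And>t. \<bar>t\<bar> < 1 / 2 \<Longrightarrow> ln (1 + 0) + ln (1 + 2 * t) - 2 * ln (1 + t) = t\<^sup>2 * h t"
    by (rule has_power_series_second_difference[OF has_power_series_ln]) auto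
  thus thesis using that by simp
qed

definition inv_root :: "nat \<Rightarrow> nat \<Rightarrow> real" where
  "inv_root \<rho> n = real n powr (- 1 / real \<rho>)"

lemma inv_root_power: "n > 0 \<Longrightarrow> inv_root \<rho> n ^ k = real n powr (- real k / real \<rho>)"
  by (simp add: inv_root_def powr_realpow[symmetric] powr_powr)

lemma smallo_real_powr_iff_inv_root:
  "f \<in> o(\<lambda>n. real n powr (- real M / real \<rho>)) \<longleftrightarrow> f \<in> o(\<lambda>n. inv_root \<rho> n ^ M)"
proof -
  have "eventually (\<lambda>n. real n powr (- real M / real \<rho>) = inv_root \<rho> n ^ M) sequentially"
    using eventually_gt_at_top[of 0] by eventually_elim (simp add: inv_root_power)
  thus ?thesis by (simp only: landau_o.small.cong)
qed

lemma inv_root_eventually_nonzero: "eventually (\<lambda>n. inv_root \<rho> n \<noteq> 0) sequentially"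
  using eventually_gt_at_top[of 0] by eventually_elim (simp add: inv_root_def)

context
  fixes \<rho> :: nat
  assumes \<rho>: "\<rho> > 0"
begin

lemma inv_root_tendsto: "inv_root \<rho> \<longlonglongrightarrow> 0"
  unfolding inv_root_def
  by (rule tendsto_neg_powr[OF _ filterlim_real_sequentially]) (use \<rho> in simp)

lemma has_poly_expansion_reciprocal: "has_poly_expansion (inv_root \<rho>) (\<lambda>n. c / real n) 0"
proof (rule has_poly_expansion_cong)
  have "has_poly_expansion (inv_root \<rho>) (\<lambda>n. c * inv_root \<rho> n ^ \<rho>) (c * 0 ^ \<rho>)"
    by (intro has_poly_expansion_cmult has_poly_expansion_power[OF inv_root_tendsto]
        has_poly_expansion_ident)
  thus "has_poly_expansion (inv_root \<rho>) (\<lambda>n. c * inv_root \<rho> n ^ \<rho>) 0"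
    using \<rho> by (simp add: power_0_left)
  show "eventually (\<lambda>n. c * inv_root \<rho> n ^ \<rho> = c / real n) sequentially"
    using eventually_gt_at_top[of 0]
    by eventually_elim (use \<rho> in \<open>simp add: inv_root_power powr_minus_divide\<close>)
qed

lemma has_poly_expansion_power_series_reciprocal:
  "has_power_series g R a \<Longrightarrow> has_poly_expansion (inv_root \<rho>) (\<lambda>n. g (c / real n)) (g 0)"
  by (rule has_poly_expansion_compose[OF inv_root_tendsto has_poly_expansion_reciprocal])

lemma has_poly_expansion_inv_root_shift:
  "has_poly_expansion (inv_root \<rho>) (\<lambda>n. inv_root \<rho> (n + k)) 0"
proof (rule has_poly_expansion_cong)
  show "has_poly_expansion (inv_root \<rho>) (\<lambda>n. inv_root \<rho> n * (1 + real k / real n) powr (- 1 / real \<rho>)) 0"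
    using has_poly_expansion_mult[OF inv_root_tendsto has_poly_expansion_ident
        has_poly_expansion_power_series_reciprocal[OF has_power_series_powr]] by simp
  show "eventually (\<lambda>n. inv_root \<rho> n * (1 + real k / real n) powr (- 1 / real \<rho>)
      = inv_root \<rho> (n + k)) sequentially"
    using eventually_gt_at_top[of 0]
    by eventually_elim (simp add: inv_root_def powr_add_factor[of "real _" "real k"])
qed

lemma smallo_inv_root_power_shift:
  assumes "f \<in> o(\<lambda>n. inv_root \<rho> n ^ M)"
  shows "(\<lambda>n. f (n + k)) \<in> o(\<lambda>n. inv_root \<rho> n ^ M)"
proof -
  have "(\<lambda>n. f (n + k)) \<in> o(\<lambda>n. inv_root \<rho> (n + k) ^ M)"
    by (rule landau_o.small.compose[OF assms filterlim_add_const_nat_at_top])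
  also have "(\<lambda>n. inv_root \<rho> (n + k) ^ M) \<in> O(\<lambda>n. inv_root \<rho> n ^ M)"
    by (intro landau_o.big_power has_poly_expansion_bigo[OF inv_root_tendsto]
        has_poly_expansion_inv_root_shift)
  finally show ?thesis .
qed

lemma second_diff_powr_expansion:
  assumes j: "j < 2 * \<rho>"
  shows "has_poly_expansion (inv_root \<rho>) (second_diff (\<lambda>n. real n powr (real j / real \<rho>))) 0"
proof -
  define \<alpha> where "\<alpha> = real j / real \<rho>"
  obtain h c where hs: "has_power_series h (1 / 2) c" and
    h: "\<And>t. \<bar>t\<bar> < 1 / 2 \<Longrightarrow> 1 + (1 + 2 * t) powr \<alpha> - 2 * (1 + t) powr \<alpha> = t\<^sup>2 * h t"
    using has_power_series_second_difference[OF has_power_series_powr[of \<alpha>]] by auto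
  have "has_poly_expansion (inv_root \<rho>) (\<lambda>n. inv_root \<rho> n ^ (2 * \<rho> - j) * h (1 / real n))
      (0 ^ (2 * \<rho> - j) * h 0)"
    by (intro has_poly_expansion_mult[OF inv_root_tendsto] has_poly_expansion_ident
        has_poly_expansion_power[OF inv_root_tendsto] has_poly_expansion_power_series_reciprocal[OF hs])
  moreover have "eventually (\<lambda>n. inv_root \<rho> n ^ (2 * \<rho> - j) * h (1 / real n)
      = second_diff (\<lambda>n. real n powr (real j / real \<rho>)) n) sequentially"
    using eventually_ge_at_top[of 3]
  proof eventually_elim
    case (elim n)
    hence n: "real n > 0" "\<bar>1 / real n\<bar> < 1 / 2" by simp_all
    have "- real (2 * \<rho> - j) / real \<rho> = \<alpha> + (- 2)"
      using j \<rho> by (simp add: \<alpha>_def of_nat_diff field_simps)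
    hence "inv_root \<rho> n ^ (2 * \<rho> - j) = real n powr \<alpha> / real n powr 2"
      using n by (simp add: inv_root_power powr_diff)
    also have "\<dots> = real n powr \<alpha> * (1 / real n)\<^sup>2"
      using n by (simp add: powr_numeral power_one_over)
    finally have "inv_root \<rho> n ^ (2 * \<rho> - j) = real n powr \<alpha> * (1 / real n)\<^sup>2" .
    moreover have "real (n + k) powr \<alpha> = real n powr \<alpha> * (1 + real k * (1 / real n)) powr \<alpha>" for k
      using powr_add_factor[of "real n" "real k" \<alpha>] n by simp
    from this[of 1] this[of 2]
    have "second_diff (\<lambda>n. real n powr (real j / real \<rho>)) n
        = real n powr \<alpha> * (1 + (1 + 2 * (1 / real n)) powr \<alpha> - 2 * (1 + 1 / real n) powr \<alpha>)"
      unfolding second_diff_def \<alpha>_def[symmetric] by (simp add: algebra_simps)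
    ultimately show ?case unfolding h[OF n(2)] by simp
  qed
  ultimately show ?thesis using j by (simp add: power_0_left has_poly_expansion_cong)
qed

lemma second_diff_ln_expansion: "has_poly_expansion (inv_root \<rho>) (second_diff (\<lambda>n. ln (real n))) 0"
proof -
  obtain h c where hs: "has_power_series h (1 / 2) c"
    and h: "\<And>t. \<bar>t\<bar> < 1 / 2 \<Longrightarrow> ln (1 + 2 * t) - 2 * ln (1 + t) = t\<^sup>2 * h t"
    by (rule ln_second_difference) auto
  have "has_poly_expansion (inv_root \<rho>) (\<lambda>n. 1 / real n * (1 / real n) * h (1 / real n)) (0 * 0 * h 0)"
    by (intro has_poly_expansion_mult[OF inv_root_tendsto] has_poly_expansion_reciprocal
        has_poly_expansion_power_series_reciprocal[OF hs])
  moreover have "eventually (\<lambda>n. 1 / real n * (1 / real n) * h (1 / real n)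
      = second_diff (\<lambda>n. ln (real n)) n) sequentially"
    using eventually_ge_at_top[of 3]
  proof eventually_elim
    case (elim n)
    hence "\<bar>1 / real n\<bar> < 1 / 2" by simp
    from h[OF this] ln_of_nat_add_factor[of n 1] ln_of_nat_add_factor[of n 2] elim show ?case
      by (simp add: second_diff_def power2_eq_square)
  qed
  ultimately show ?thesis by (simp add: has_poly_expansion_cong)
qed

lemma second_diff_xlnx_expansion:
  "has_poly_expansion (inv_root \<rho>) (second_diff (\<lambda>n. real n * ln (real n))) 0"
proof -
  obtain h c where hs: "has_power_series h (1 / 2) c"
    and h: "\<And>t. \<bar>t\<bar> < 1 / 2 \<Longrightarrow> ln (1 + 2 * t) - 2 * ln (1 + t) = t\<^sup>2 * h t"
    by (rule ln_second_difference) auto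
  have "has_poly_expansion (inv_root \<rho>)
      (\<lambda>n. 1 / real n * h (1 / real n) + 2 * ln (1 + 2 / real n) - 2 * ln (1 + 1 / real n))
      (0 * h 0 + 2 * ln (1 + 0) - 2 * ln (1 + 0))"
    by (intro has_poly_expansion_add has_poly_expansion_diff has_poly_expansion_cmult
        has_poly_expansion_mult[OF inv_root_tendsto] has_poly_expansion_reciprocal
        has_poly_expansion_power_series_reciprocal[OF hs]
        has_poly_expansion_power_series_reciprocal[OF has_power_series_ln])
  moreover have "eventually (\<lambda>n. 1 / real n * h (1 / real n) + 2 * ln (1 + 2 / real n)
      - 2 * ln (1 + 1 / real n) = second_diff (\<lambda>n. real n * ln (real n)) n) sequentially"
    using eventually_ge_at_top[of 3]
  proof eventually_elim
    case (elim n)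
    hence "\<bar>1 / real n\<bar> < 1 / 2" by simp
    from h[OF this] ln_of_nat_add_factor[of n 1] ln_of_nat_add_factor[of n 2] elim show ?case
      by (simp add: second_diff_def power2_eq_square field_simps)
  qed
  ultimately show ?thesis by (simp add: has_poly_expansion_cong)
qed

lemma second_diff_Qexp_ln_expansion:
  "has_poly_expansion (inv_root \<rho>) (second_diff (\<lambda>n. Qexp \<rho> \<mu> n + r * ln (real n))) 0"
proof -
  have "second_diff (\<lambda>n. Qexp \<rho> \<mu> n + r * ln (real n)) = (\<lambda>n.
      \<mu> 0 * second_diff (\<lambda>n. real n * ln (real n)) n
      + (\<Sum>j=1..\<rho>. \<mu> j * second_diff (\<lambda>n. real n powr (real j / real \<rho>)) n)
      + r * second_diff (\<lambda>n. ln (real n)) n)"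
    by (simp add: fun_eq_iff second_diff_def Qexp_def sum.distrib sum_subtractf sum_distrib_left
        algebra_simps)
  moreover have "has_poly_expansion (inv_root \<rho>) \<dots> (\<mu> 0 * 0 + (\<Sum>j=1..\<rho>. \<mu> j * 0) + r * 0)"
    using \<rho> by (intro has_poly_expansion_add has_poly_expansion_cmult has_poly_expansion_sum
        second_diff_xlnx_expansion second_diff_ln_expansion second_diff_powr_expansion) auto
  ultimately show ?thesis by simp
qed

lemma has_poly_expansion_inv_root_sum_shift:
  "has_poly_expansion (inv_root \<rho>) (\<lambda>n. \<Sum>s=0..M. b s * inv_root \<rho> (n + k) ^ s) (b 0)"
proof -
  have "has_poly_expansion (inv_root \<rho>) (\<lambda>n. \<Sum>s=0..M. b s * inv_root \<rho> (n + k) ^ s)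
      (\<Sum>s=0..M. b s * 0 ^ s)"
    by (intro has_poly_expansion_sum has_poly_expansion_cmult
        has_poly_expansion_power[OF inv_root_tendsto] has_poly_expansion_inv_root_shift)
  moreover have "(\<Sum>s=0..M. b s * 0 ^ s) = b 0"
    by (simp add: power_0_left sum.atLeast_Suc_atMost[of 0 M])
  ultimately show ?thesis by simp
qed

lemma smallo_inv_root_power_imp_tendsto:
  assumes "c 0 = 1" "(\<lambda>n. R n - (\<Sum>i\<le>M. c i * inv_root \<rho> n ^ i)) \<in> o(\<lambda>n. inv_root \<rho> n ^ M)"
  shows "(\<lambda>n. real n powr (real M / real \<rho>) *
      (R n - 1 - (\<Sum>i=1..M. c i / real n powr (real i / real \<rho>)))) \<longlonglongrightarrow> 0"
proof (rule Lim_transform_eventually[OF smalloD_tendsto[OF assms(2)]])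
  show "eventually (\<lambda>n. (R n - (\<Sum>i\<le>M. c i * inv_root \<rho> n ^ i)) / inv_root \<rho> n ^ M
      = real n powr (real M / real \<rho>) *
        (R n - 1 - (\<Sum>i=1..M. c i / real n powr (real i / real \<rho>)))) sequentially"
    using eventually_gt_at_top[of 0]
  proof eventually_elim
    case (elim n)
    have x: "inv_root \<rho> n ^ i = 1 / real n powr (real i / real \<rho>)" for i
      using inv_root_power[OF elim, of \<rho> i] powr_minus_divide[of "real n" "real i / real \<rho>"] by simp
    have "(\<Sum>i\<le>M. c i * inv_root \<rho> n ^ i) = 1 + (\<Sum>i=1..M. c i / real n powr (real i / real \<rho>))"
      using assms(1) elim by (simp add: x atMost_atLeast0 sum.atLeast_Suc_atMost[of 0 M])
    thus ?case using elim by (simp add: x)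
  qed
qed

end

theorem mainTheorem3:
  fixes a :: "nat \<Rightarrow> real" and \<rho> M :: nat and \<mu> b :: "nat \<Rightarrow> real" and r :: real
  assumes "P_recursive a"
    and "\<rho> > 0" and "M > 0"
    and "b 0 \<noteq> 0"
    and "(\<lambda>n. a n / (exp (Qexp \<rho> \<mu> n) * real n powr r)
              - (\<Sum>s=0..M. b s * real n powr (- real s / real \<rho>)))
          \<in> o[sequentially](\<lambda>n. real n powr (- real M / real \<rho>))"
  shows "\<exists>c :: nat \<Rightarrow> real.
           (\<lambda>n. real n powr (real M / real \<rho>) *
               (a n * a (n + 2) / (a (n + 1))\<^sup>2 - 1
                - (\<Sum>i=1..M. c i / real n powr (real i / real \<rho>))))
           \<longlonglongrightarrow> 0"
proof -
  note \<rho> = \<open>\<rho> > 0\<close>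
  define \<Lambda> where "\<Lambda> n = Qexp \<rho> \<mu> n + r * ln (real n)" for n
  define B where "B n = (\<Sum>s=0..M. b s * inv_root \<rho> n ^ s)" for n
  define e where "e n = a n / exp (\<Lambda> n) - B n" for n
  have "eventually (\<lambda>n. a n / (exp (Qexp \<rho> \<mu> n) * real n powr r)
      - (\<Sum>s=0..M. b s * real n powr (- real s / real \<rho>)) = e n) sequentially"
    using eventually_gt_at_top[of 0]
    by eventually_elim (simp add: e_def B_def \<Lambda>_def inv_root_power exp_mult_powr)
  with assms(5) have "e \<in> o(\<lambda>n. real n powr (- real M / real \<rho>))"
    by (simp only: landau_o.small.in_cong)
  hence e: "e \<in> o(\<lambda>n. inv_root \<rho> n ^ M)" unfolding smallo_real_powr_iff_inv_root .
  obtain c where "c 0 = 1" "(\<lambda>n. a n * a (n + 2) / (a (n + 1))\<^sup>2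
      - (\<Sum>i\<le>M. c i * inv_root \<rho> n ^ i)) \<in> o(\<lambda>n. inv_root \<rho> n ^ M)"
  proof (rule ratio_asymptotic_expansion[where x = "inv_root \<rho>" and \<Lambda> = \<Lambda> and B = B and e = e
        and \<beta> = "b 0"])
    show "has_poly_expansion (inv_root \<rho>) (\<lambda>n. B (n + k)) (b 0)" for k
      unfolding B_def by (rule has_poly_expansion_inv_root_sum_shift[OF \<rho>])
    show "(\<lambda>n. e (n + k)) \<in> o(\<lambda>n. inv_root \<rho> n ^ M)" for k
      by (rule smallo_inv_root_power_shift[OF \<rho> e])
    show "eventually (\<lambda>n. a n = exp (\<Lambda> n) * (B n + e n)) sequentially"
      by (simp add: e_def)
  qed (use assms(4) inv_root_tendsto[OF \<rho>] inv_root_eventually_nonzero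
      second_diff_Qexp_ln_expansion[OF \<rho>] in \<open>simp_all add: \<Lambda>_def[abs_def]\<close>)
  thus ?thesis by (intro exI[of _ c] smallo_inv_root_power_imp_tendsto[OF \<rho>])
qed

end
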